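(* Let $\mathcal{F}:\mathcal{H}_2\to\mathbb{R}$ be any function on the Siegel upper half-space $\mathcal{H}_2$ which is invariant under the action of $\mathrm{Sp}(4,\mathbb{Z})$ and which is $C^1$ in open neighborhoods of the points $$\mathbf{B}_1=\begin{pmatrix} \frac{i}{\sqrt{2}}-\frac{1}{2} & \frac{1}{2} \\ \frac{1}{2} & \frac{i}{\sqrt{2}}-\frac{1}{2}\end{pmatrix},\qquad \mathbf{B}_2=\frac{i}{\sqrt{3}}\begin{pmatrix} 2 & 1 \\ 1 & 2\end{pmatrix},\qquad \mathbf{B}_3=\begin{pmatrix} \epsilon_5 & \frac{\epsilon_5}{1+\epsilon_5} \\ \frac{\epsilon_5}{1+\epsilon_5} & 1-\epsilon_5^4\end{pmatrix},$$ where $\epsilon_5=e^{2\pi i/5}$; these are the matrices of $b$-periods (in suitable canonical bases of cycles) of the curves with large automorphism groups $y^2=x(x^4-1)$, $y^2=x^6-1$ and $y^2=x^5-1$ respectively. Then the gradient of $\mathcal{F}$ vanishes at the points $\mathbf{B}_1$, $\mathbf{B}_2$ and $\mathbf{B}_3$.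
   Context: $\mathcal{H}_2$ denotes the space of complex symmetric $2\times 2$ matrices $\mathbf{B}$ with positive definite imaginary part. A matrix $T=\begin{pmatrix}A&B'\\C&D\end{pmatrix}\in\mathrm{Sp}(4,\mathbb{Z})$ (with $2\times2$ blocks) acts on $\mathcal{H}_2$ by $\mathbf{B}\mapsto (A\mathbf{B}+B')(C\mathbf{B}+D)^{-1}$; invariance means $\mathcal{F}(T\cdot\mathbf{B})=\mathcal{F}(\mathbf{B})$ for all $T$ and $\mathbf{B}$. The gradient is taken with respect to the real coordinates given by the real and imaginary parts of the three independent entries $\mathbf{B}_{11},\mathbf{B}_{12},\mathbf{B}_{22}$. *)

theory Defs
  imports "HOL-Analysis.Analysis"
begin

definition mat2 :: "'a \<Rightarrow> 'a \<Rightarrow> 'a \<Rightarrow> 'a \<Rightarrow> 'a^2^2" where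
  "mat2 a b c d = (\<chi> i j. if i = 1 then (if j = 1 then a else b) else (if j = 1 then c else d))"

definition Im_mat :: "complex^2^2 \<Rightarrow> real^2^2" where
  "Im_mat M = (\<chi> i j. Im (M $ i $ j))"

definition siegel_H2 :: "(complex^2^2) set" where
  "siegel_H2 = {M. transpose M = M \<and>
     (\<forall>x::real^2. x \<noteq> 0 \<longrightarrow> x \<bullet> (Im_mat M *v x) > 0)}"

text \<open>Sp(4,Z), with elements given by their 2x2 blocks (A,B,C,D) of
  T = [[A,B],[C,D]]; the condition T^T J T = J with J = [[0,I],[-I,0]]
  written out block by block.\<close>
definition Sp4Z :: "((int^2^2) \<times> (int^2^2) \<times> (int^2^2) \<times> (int^2^2)) set" where
  "Sp4Z = {(A, B, C, D) | A B C D :: int^2^2.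
      transpose A ** C - transpose C ** A = 0 \<and>
      transpose A ** D - transpose C ** B = mat 1 \<and>
      transpose B ** C - transpose D ** A = - mat 1 \<and>
      transpose B ** D - transpose D ** B = 0}"

definition cmat_of_int :: "int^2^2 \<Rightarrow> complex^2^2" where
  "cmat_of_int M = (\<chi> i j. of_int (M $ i $ j))"

definition sp_act :: "(int^2^2) \<times> (int^2^2) \<times> (int^2^2) \<times> (int^2^2) \<Rightarrow> complex^2^2 \<Rightarrow> complex^2^2" where
  "sp_act T Z = (case T of (A, B, C, D) \<Rightarrow>
     (cmat_of_int A ** Z + cmat_of_int B) ** matrix_inv (cmat_of_int C ** Z + cmat_of_int D))"

text \<open>Coordinates: a symmetric matrix is determined by its entries (Z11, Z12, Z22);
  complex^3 is viewed as a real vector space (real and imaginary parts).\<close>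
definition sym_of :: "complex \<times> complex \<times> complex \<Rightarrow> complex^2^2" where
  "sym_of p = (case p of (a, b, c) \<Rightarrow> mat2 a b b c)"

definition eps5 :: complex where "eps5 = cis (2 * pi / 5)"

definition B1 :: "complex \<times> complex \<times> complex" where
  "B1 = (\<i> / sqrt 2 - 1/2, 1/2, \<i> / sqrt 2 - 1/2)"

definition B2 :: "complex \<times> complex \<times> complex" where
  "B2 = (\<i> / sqrt 3 * 2, \<i> / sqrt 3, \<i> / sqrt 3 * 2)"

definition B3 :: "complex \<times> complex \<times> complex" where
  "B3 = (eps5, eps5 / (1 + eps5), 1 - eps5 ^ 4)"

definition C1_near :: "(complex^2^2 \<Rightarrow> real) \<Rightarrow> complex \<times> complex \<times> complex \<Rightarrow> bool" where
  "C1_near F p = (\<exists>U G'. open U \<and> p \<in> U \<and> sym_of ` U \<subseteq> siegel_H2 \<and>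
       (\<forall>x\<in>U. ((F \<circ> sym_of) has_derivative blinfun_apply (G' x)) (at x)) \<and>
       continuous_on U (G' :: complex \<times> complex \<times> complex \<Rightarrow> (complex \<times> complex \<times> complex) \<Rightarrow>\<^sub>L real))"

end

theory Submission
  imports Defs
begin

text \<open>Each \<open>B\<^sub>k\<close> is fixed by an element \<open>T\<^sub>k\<close> of Sp(4,Z). In the coordinates
  (Z11, Z12, Z22) the action of \<open>T\<^sub>k\<close> is a rational map \<open>\<phi>\<^sub>k\<close> with \<open>\<phi>\<^sub>k(B\<^sub>k) = B\<^sub>k\<close>,
  and its differential \<open>K\<^sub>k\<close> at \<open>B\<^sub>k\<close> does not have 1 as an eigenvalue. Differentiating
  \<open>F \<circ> \<phi>\<^sub>k = F\<close> at \<open>B\<^sub>k\<close> gives \<open>dF \<circ> (K\<^sub>k - id) = 0\<close>, and as \<open>K\<^sub>k - id\<close> is onto, \<open>dF = 0\<close>.\<close>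

lemma mat2_nth [simp]:
  "mat2 a b c d $ 1 $ 1 = a" "mat2 a b c d $ 1 $ 2 = b"
  "mat2 a b c d $ 2 $ 1 = c" "mat2 a b c d $ 2 $ 2 = d"
  unfolding mat2_def by auto

lemma mat2_eq_iff: "mat2 a b c d = mat2 a' b' c' d' \<longleftrightarrow> a = a' \<and> b = b' \<and> c = c' \<and> d = d'"
  unfolding mat2_def vec_eq_iff forall_2 by auto

lemma mat2_mult:
  "mat2 a b c d ** mat2 e f g h = mat2 (a*e + b*g) (a*f + b*h) (c*e + d*g) (c*f + d*h)"
  unfolding vec_eq_iff forall_2 matrix_matrix_mult_def sum_2 by simp

lemma mat2_add: "mat2 a b c d + mat2 e f g h = mat2 (a + e) (b + f) (c + g) (d + h)"
  unfolding vec_eq_iff forall_2 by simp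

lemma mat2_diff: "mat2 a b c d - mat2 e f g h = mat2 (a - e) (b - f) (c - g) (d - h)"
  unfolding vec_eq_iff forall_2 by simp

lemma mat2_uminus: "- mat2 a b c d = mat2 (- a) (- b) (- c) (- d)"
  unfolding vec_eq_iff forall_2 by simp

lemma transpose_mat2: "transpose (mat2 a b c d) = mat2 a c b d"
  unfolding vec_eq_iff forall_2 transpose_def by simp

lemma mat_1_eq_mat2: "mat 1 = mat2 1 0 0 1"
  unfolding vec_eq_iff forall_2 mat_def by simp

lemma zero_eq_mat2: "0 = mat2 0 0 0 0"
  unfolding vec_eq_iff forall_2 by simp

lemma cmat_of_int_mat2: "cmat_of_int (mat2 a b c d) = mat2 (of_int a) (of_int b) (of_int c) (of_int d)"
  unfolding vec_eq_iff forall_2 cmat_of_int_def by simp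

lemmas mat2_arith = mat2_mult mat2_add mat2_diff mat2_uminus transpose_mat2
  mat_1_eq_mat2 zero_eq_mat2 cmat_of_int_mat2 mat2_eq_iff

lemma matrix_inv_eqI:
  fixes M :: "'a::semiring_1^'n^'m" and N :: "'a^'m^'n"
  assumes "M ** N = mat 1" "N ** M = mat 1"
  shows "matrix_inv M = N"
proof -
  have "M ** matrix_inv M = mat 1 \<and> matrix_inv M ** M = mat 1"
    unfolding matrix_inv_def using assms by (rule someI[where x = N, OF conjI])
  then have "N = (N ** M) ** matrix_inv M"
    by (simp add: matrix_mul_assoc[symmetric] matrix_mul_rid)
  with assms show ?thesis by (simp add: matrix_mul_lid)
qed

lemma matrix_inv_mat2:
  fixes a b c d :: "'a::field"
  assumes "a * d - b * c = \<Delta>" "\<Delta> \<noteq> 0"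
  shows "matrix_inv (mat2 a b c d) = mat2 (d / \<Delta>) (- b / \<Delta>) (- c / \<Delta>) (a / \<Delta>)"
  using assms by (intro matrix_inv_eqI) (auto simp: mat2_arith field_simps)

lemma has_derivative_zero_at_fixed_point:
  fixes f :: "'a::real_normed_vector \<Rightarrow> 'b::real_normed_vector"
  assumes f: "(f has_derivative f') (at p)"
    and \<phi>: "(\<phi> has_derivative K) (at p)" "\<phi> p = p"
    and inv: "open V" "p \<in> V" "\<And>z. z \<in> V \<Longrightarrow> f (\<phi> z) = f z"
    and onto: "surj (\<lambda>w. K w - w)"
  shows "f' = (\<lambda>_. 0)"
proof
  have "((f \<circ> \<phi>) has_derivative f' \<circ> K) (at p)"
    using diff_chain_at[OF \<phi>(1)] f \<phi>(2) by simp
  then have "(f has_derivative f' \<circ> K) (at p)"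
    using inv(1,2) by (rule has_derivative_transform_within_open) (simp add: inv(3))
  then have fK: "f' \<circ> K = f'"
    using f by (rule has_derivative_unique)
  fix v
  obtain w where "v = K w - w" using onto by blast
  then have "f' v = f' (K w) - f' w"
    using f has_derivative_linear linear_diff by blast
  with fK show "f' v = 0" by (metis comp_apply diff_self)
qed

lemma invariant_has_derivative_zero_at_fixed_point:
  fixes F :: "complex^2^2 \<Rightarrow> real"
  assumes inv: "\<And>Z. Z \<in> siegel_H2 \<Longrightarrow> F (sp_act T Z) = F Z"
    and c1: "C1_near F p"
    and act: "open V" "p \<in> V" "\<And>z. z \<in> V \<Longrightarrow> sp_act T (sym_of z) = sym_of (\<phi> z)"
    and \<phi>: "(\<phi> has_derivative K) (at p)" "\<phi> p = p"
    and onto: "surj (\<lambda>w. K w - w)"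
  shows "((F \<circ> sym_of) has_derivative (\<lambda>_. 0)) (at p)"
proof -
  obtain U G' where U: "open U" "p \<in> U" "sym_of ` U \<subseteq> siegel_H2"
    and G': "((F \<circ> sym_of) has_derivative blinfun_apply (G' p)) (at p)"
    using c1 unfolding C1_near_def by blast
  have "(F \<circ> sym_of) (\<phi> z) = (F \<circ> sym_of) z" if "z \<in> U \<inter> V" for z
    using that U(3) act(3) inv by (simp add: image_subset_iff) metis
  then have "blinfun_apply (G' p) = (\<lambda>_. 0)"
    using U(1,2) act(1,2) onto by (intro has_derivative_zero_at_fixed_point[OF G' \<phi>, of "U \<inter> V"]) auto
  with G' show ?thesis by simp
qed

definition T1 :: "(int^2^2) \<times> (int^2^2) \<times> (int^2^2) \<times> (int^2^2)" where
  "T1 = (mat2 (-1) 0 0 0, mat2 (-1) 1 0 (-1), mat2 1 0 0 1, mat2 0 (-1) (-1) 1)"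

definition den1 :: "complex \<times> complex \<times> complex \<Rightarrow> complex" where
  "den1 = (\<lambda>(z1, z2, z3). z1 * (z3 + 1) - (z2 - 1) * (z2 - 1))"

definition phi1 :: "complex \<times> complex \<times> complex \<Rightarrow> complex \<times> complex \<times> complex" where
  "phi1 z = (case z of (z1, z2, z3) \<Rightarrow>
     (((1 - z2) * (1 - z2) - (z1 + 1) * (z3 + 1)) / den1 z, (z2 - 1) / den1 z, - z1 / den1 z))"

definition dphi1 :: "complex \<Rightarrow> complex \<times> complex \<times> complex \<Rightarrow> complex \<times> complex \<times> complex" where
  "dphi1 a = (\<lambda>(h1, h2, h3).
     ((1/4 + a) * h1 + (1 + a) * h2 + h3 / 4,
      (1 + a) / 2 * h1 - h2 / 2 + a / 2 * h3,
      h1 / 4 + a * h2 - (3/4 + a) * h3))"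

lemma T1_in_Sp4Z: "T1 \<in> Sp4Z"
  unfolding T1_def Sp4Z_def by (simp add: mat2_arith)

lemma sp_act_T1: "den1 z \<noteq> 0 \<Longrightarrow> sp_act T1 (sym_of z) = sym_of (phi1 z)"
proof (cases z)
  case (fields z1 z2 z3)
  assume den: "den1 z \<noteq> 0"
  have "cmat_of_int (mat2 1 0 0 1) ** sym_of z + cmat_of_int (mat2 0 (-1) (-1) 1) =
      mat2 z1 (z2 - 1) (z2 - 1) (z3 + 1)"
    by (simp add: fields sym_of_def mat2_arith)
  moreover have "z1 * (z3 + 1) - (z2 - 1) * (z2 - 1) = den1 z"
    by (simp add: fields den1_def)
  ultimately show ?thesis
    using den unfolding sp_act_def T1_def prod.case
    by (simp add: matrix_inv_mat2 phi1_def fields sym_of_def mat2_arith field_simps)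
      algebra
qed

lemma open_den1_nonzero: "open {z. den1 z \<noteq> 0}"
  unfolding den1_def case_prod_unfold by (intro open_Collect_neq continuous_intros)

lemma B1_eq: "B1 = (a, 1/2, a)" and B1_diag_quadratic: "a * a + a + 3/4 = 0" if "a = \<i> / sqrt 2 - 1/2"
proof -
  show "B1 = (a, 1/2, a)" using that by (simp add: B1_def)
  have "(\<i> / sqrt 2) * (\<i> / sqrt 2) = - 1/2"
    by (simp add: field_simps flip: of_real_mult)
  then show "a * a + a + 3/4 = 0"
    unfolding that by algebra
qed

lemma den1_fixed: "a * a + a + 3/4 = 0 \<Longrightarrow> den1 (a, 1/2, a) = -1"
  unfolding den1_def prod.case by algebra

lemma phi1_fixed: "a * a + a + 3/4 = 0 \<Longrightarrow> phi1 (a, 1/2, a) = (a, 1/2, a)"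
  unfolding phi1_def by (simp add: den1_fixed) algebra

lemma has_derivative_phi1:
  assumes a: "a * a + a + 3/4 = 0"
  shows "(phi1 has_derivative dphi1 a) (at (a, 1/2, a))"
proof -
  have den: "a * (a + 1) - (1/2 - 1) * (1/2 - 1) = -1" using a by algebra
  show ?thesis
    unfolding phi1_def den1_def case_prod_unfold
    apply (rule has_derivative_eq_rhs)
     apply (rule derivative_intros | simp only: fst_conv snd_conv den, simp)+
    apply (rule ext)
    apply (simp add: dphi1_def case_prod_unfold prod_eq_iff field_simps)
    using a by (intro conjI; algebra)
qed

lemma surj_dphi1_minus_id:
  assumes a: "a * a + a + 3/4 = 0"
  shows "surj (\<lambda>w. dphi1 a w - w)"
  by (rule surjI[where f = "\<lambda>(v1, v2, v3).
      ((-3/4 - a/2) * v1 - (1/4 + a/2) * v2,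
       - (1/8 + a/4) * v1 - v2 / 2 - (1/8 + a/4) * v3,
       - (1/4 + a/2) * v2 + (a/2 - 1/4) * v3)"])
    (use a in \<open>simp add: split_paired_all dphi1_def prod_eq_iff field_simps; algebra\<close>)

definition T2 :: "(int^2^2) \<times> (int^2^2) \<times> (int^2^2) \<times> (int^2^2)" where
  "T2 = (mat2 0 0 0 0, mat2 (-1) (-1) 0 (-1), mat2 1 0 (-1) 1, mat2 0 0 0 0)"

definition den2 :: "complex \<times> complex \<times> complex \<Rightarrow> complex" where
  "den2 = (\<lambda>(z1, z2, z3). z1 * z3 - z2 * z2)"

definition phi2 :: "complex \<times> complex \<times> complex \<Rightarrow> complex \<times> complex \<times> complex" where
  "phi2 z = (case z of (z1, z2, z3) \<Rightarrow>
     ((2 * z2 - z1 - z3) / den2 z, (z2 - z1) / den2 z, - z1 / den2 z))"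

definition dphi2 :: "complex \<times> complex \<times> complex \<Rightarrow> complex \<times> complex \<times> complex" where
  "dphi2 = (\<lambda>(h1, h2, h3).
     (- h1 / 3 - 2 * h2 / 3 - h3 / 3, h1 / 3 - h2 / 3 - 2 * h3 / 3, - h1 / 3 + 4 * h2 / 3 - 4 * h3 / 3))"

lemma T2_in_Sp4Z: "T2 \<in> Sp4Z"
  unfolding T2_def Sp4Z_def by (simp add: mat2_arith)

lemma sp_act_T2: "den2 z \<noteq> 0 \<Longrightarrow> sp_act T2 (sym_of z) = sym_of (phi2 z)"
proof (cases z)
  case (fields z1 z2 z3)
  assume den: "den2 z \<noteq> 0"
  have "cmat_of_int (mat2 1 0 (-1) 1) ** sym_of z + cmat_of_int (mat2 0 0 0 0) =
      mat2 z1 z2 (z2 - z1) (z3 - z2)"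
    by (simp add: fields sym_of_def mat2_arith)
  moreover have "z1 * (z3 - z2) - z2 * (z2 - z1) = den2 z"
    by (simp add: fields den2_def algebra_simps)
  ultimately show ?thesis
    using den unfolding sp_act_def T2_def prod.case
    by (simp add: matrix_inv_mat2 phi2_def fields sym_of_def mat2_arith field_simps)
qed

lemma open_den2_nonzero: "open {z. den2 z \<noteq> 0}"
  unfolding den2_def case_prod_unfold by (intro open_Collect_neq continuous_intros)

lemma B2_eq: "B2 = (2 * t, t, 2 * t)" and B2_offdiag_square: "t * t = - 1/3" if "t = \<i> / sqrt 3"
proof -
  show "B2 = (2 * t, t, 2 * t)" using that by (simp add: B2_def)
  show "t * t = - 1/3"
    unfolding that by (simp add: field_simps flip: of_real_mult)
qed

lemma den2_fixed: "t * t = - 1/3 \<Longrightarrow> den2 (2 * t, t, 2 * t) = -1"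
  unfolding den2_def by simp

lemma phi2_fixed: "t * t = - 1/3 \<Longrightarrow> phi2 (2 * t, t, 2 * t) = (2 * t, t, 2 * t)"
  unfolding phi2_def by (simp add: den2_fixed)

lemma has_derivative_phi2:
  assumes t: "t * t = - 1/3"
  shows "(phi2 has_derivative dphi2) (at (2 * t, t, 2 * t))"
proof -
  have den: "2 * t * (2 * t) - t * t = -1" using t by simp
  show ?thesis
    unfolding phi2_def den2_def case_prod_unfold
    apply (rule has_derivative_eq_rhs)
     apply (rule derivative_intros | simp only: fst_conv snd_conv den, simp)+
    apply (rule ext)
    apply (simp add: dphi2_def case_prod_unfold prod_eq_iff field_simps)
    using t by (intro conjI; algebra)
qed

lemma surj_dphi2_minus_id: "surj (\<lambda>w. dphi2 w - w)"
  by (rule surjI[where f = "\<lambda>(v1, v2, v3 :: complex).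
      (- 2 * v1 / 3 + v2 / 3, - v1 / 6 - v2 / 2 + v3 / 6, - v2 / 3 - v3 / 3)"])
    (simp add: split_paired_all dphi2_def field_simps)

definition T3 :: "(int^2^2) \<times> (int^2^2) \<times> (int^2^2) \<times> (int^2^2)" where
  "T3 = (mat2 (-1) 1 (-1) 0, mat2 0 0 1 1, mat2 0 0 (-1) 0, mat2 0 1 0 0)"

definition phi3 :: "complex \<times> complex \<times> complex \<Rightarrow> complex \<times> complex \<times> complex" where
  "phi3 = (\<lambda>(z1, z2, z3). ((z1 * z3 - z2 * z2) / z1, 1 - z2 / z1, 1 - 1 / z1))"

definition dphi3 :: "complex \<Rightarrow> complex \<times> complex \<times> complex \<Rightarrow> complex \<times> complex \<times> complex" where
  "dphi3 e = (\<lambda>(h1, h2, h3).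
     (- (2 + e + e^2 + 2 * e^3) * h1 + (2 * e + 2 * e^3) * h2 + h3,
      - (1 + e^2) * h1 + (1 + e + e^2 + e^3) * h2,
      e^3 * h1))"

lemma T3_in_Sp4Z: "T3 \<in> Sp4Z"
  unfolding T3_def Sp4Z_def by (simp add: mat2_arith)

lemma sp_act_T3: "fst z \<noteq> 0 \<Longrightarrow> sp_act T3 (sym_of z) = sym_of (phi3 z)"
proof (cases z)
  case (fields z1 z2 z3)
  assume "fst z \<noteq> 0"
  then have z1: "z1 \<noteq> 0" by (simp add: fields)
  have "cmat_of_int (mat2 0 0 (-1) 0) ** sym_of z + cmat_of_int (mat2 0 1 0 0) = mat2 0 1 (- z1) (- z2)"
    by (simp add: fields sym_of_def mat2_arith)
  moreover have "0 * (- z2) - 1 * (- z1) = z1" by simp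
  ultimately show ?thesis
    using z1 unfolding sp_act_def T3_def prod.case
    by (simp add: matrix_inv_mat2 phi3_def fields sym_of_def mat2_arith field_simps)
qed

lemma open_fst_nonzero: "open {z :: 'a::real_normed_vector \<times> 'b::topological_space. fst z \<noteq> 0}"
  by (intro open_Collect_neq continuous_intros)

lemma eps5_cyclotomic: "1 + eps5 + eps5^2 + eps5^3 + eps5^4 = 0"
proof -
  have "eps5 ^ 5 = 1" by (simp add: eps5_def Complex.DeMoivre)
  moreover have "eps5 \<noteq> 1"
    using sin_gt_zero[of "2 * pi / 5"] unfolding eps5_def by (auto simp: complex_eq_iff)
  moreover have "(eps5 - 1) * (1 + eps5 + eps5^2 + eps5^3 + eps5^4) = eps5 ^ 5 - 1"
    by algebra
  ultimately show ?thesis by simp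
qed

lemma B3_eq: "B3 = (eps5, 1 + eps5 + eps5^3, 1 - eps5^4)"
proof -
  have "1 + eps5 \<noteq> 0"
  proof
    assume "1 + eps5 = 0"
    then have "eps5 = -1" by (simp add: add_eq_0_iff)
    then show False using eps5_cyclotomic by algebra
  qed
  then have "eps5 / (1 + eps5) = 1 + eps5 + eps5^3"
    using eps5_cyclotomic by (simp add: field_simps) algebra
  then show ?thesis unfolding B3_def by simp
qed

lemma cyclotomic5_root_nonzero: "1 + e + e^2 + e^3 + e^4 = 0 \<Longrightarrow> (e :: complex) \<noteq> 0"
  by auto

lemma phi3_fixed:
  assumes e: "1 + e + e^2 + e^3 + e^4 = 0"
  shows "phi3 (e, 1 + e + e^3, 1 - e^4) = (e, 1 + e + e^3, 1 - e^4)"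
proof -
  have "e \<noteq> 0" using e by (rule cyclotomic5_root_nonzero)
  then show ?thesis using e by (simp add: phi3_def field_simps) algebra
qed

lemma has_derivative_phi3:
  assumes e: "1 + e + e^2 + e^3 + e^4 = 0"
  shows "(phi3 has_derivative dphi3 e) (at (e, 1 + e + e^3, 1 - e^4))"
proof -
  have "e \<noteq> 0" using e by (rule cyclotomic5_root_nonzero)
  show ?thesis
    unfolding phi3_def case_prod_unfold
    apply (rule has_derivative_eq_rhs)
     apply (rule derivative_intros | simp add: \<open>e \<noteq> 0\<close>)+
    apply (rule ext)
    apply (simp add: \<open>e \<noteq> 0\<close> dphi3_def case_prod_unfold prod_eq_iff field_simps)
    using e by (intro conjI; algebra)
qed

lemma surj_dphi3_minus_id:
  assumes e: "1 + e + e^2 + e^3 + e^4 = 0"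
  shows "surj (\<lambda>w. dphi3 e w - w)"
  by (rule surjI[where f = "\<lambda>(v1, v2, v3).
      ((e + 2 * e^2 + 2 * e^3) / 5 * v1 - (2 + 2 * e + 2 * e^2 + 4 * e^3) / 5 * v2 + (e + 2 * e^2 + 2 * e^3) / 5 * v3,
       (e^2 - e^3) / 5 * v1 - (3 + e + 2 * e^2 - e^3) / 5 * v2 + (e^2 - e^3) / 5 * v3,
       (1 + e - e^2 - e^3) / 5 * v1 + (2 * e^2 - 2 * e) / 5 * v2 - (4 - e + e^2 + e^3) / 5 * v3)"])
    (use e in \<open>simp add: split_paired_all dphi3_def prod_eq_iff field_simps; algebra\<close>)

theorem theorem5:
  fixes F :: "complex^2^2 \<Rightarrow> real"
  assumes inv: "\<And>T Z. T \<in> Sp4Z \<Longrightarrow> Z \<in> siegel_H2 \<Longrightarrow> F (sp_act T Z) = F Z"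
    and c1: "C1_near F B1" "C1_near F B2" "C1_near F B3"
  shows "((F \<circ> sym_of) has_derivative (\<lambda>_. 0)) (at B1) \<and>
         ((F \<circ> sym_of) has_derivative (\<lambda>_. 0)) (at B2) \<and>
         ((F \<circ> sym_of) has_derivative (\<lambda>_. 0)) (at B3)"
proof (intro conjI)
  obtain a where B1: "B1 = (a, 1/2, a)" and a: "a * a + a + 3/4 = 0"
    using B1_eq B1_diag_quadratic by blast
  show "((F \<circ> sym_of) has_derivative (\<lambda>_. 0)) (at B1)"
    by (rule invariant_has_derivative_zero_at_fixed_point
        [where T = T1 and V = "{z. den1 z \<noteq> 0}" and \<phi> = phi1 and K = "dphi1 a"])
      (use c1(1) in \<open>simp_all add: B1 a inv T1_in_Sp4Z open_den1_nonzero den1_fixed sp_act_T1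
        has_derivative_phi1 phi1_fixed surj_dphi1_minus_id\<close>)
  obtain t where B2: "B2 = (2 * t, t, 2 * t)" and t: "t * t = - 1/3"
    using B2_eq B2_offdiag_square by blast
  show "((F \<circ> sym_of) has_derivative (\<lambda>_. 0)) (at B2)"
    by (rule invariant_has_derivative_zero_at_fixed_point
        [where T = T2 and V = "{z. den2 z \<noteq> 0}" and \<phi> = phi2 and K = "dphi2"])
      (use c1(2) in \<open>simp_all add: B2 t inv T2_in_Sp4Z open_den2_nonzero den2_fixed sp_act_T2
        has_derivative_phi2 phi2_fixed surj_dphi2_minus_id\<close>)
  obtain e where B3: "B3 = (e, 1 + e + e^3, 1 - e^4)" and e: "1 + e + e^2 + e^3 + e^4 = 0"
    using B3_eq eps5_cyclotomic by blast
  show "((F \<circ> sym_of) has_derivative (\<lambda>_. 0)) (at B3)"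
    by (rule invariant_has_derivative_zero_at_fixed_point
        [where T = T3 and V = "{z. fst z \<noteq> 0}" and \<phi> = phi3 and K = "dphi3 e"])
      (use c1(3) cyclotomic5_root_nonzero[OF e] in \<open>simp_all add: B3 e inv T3_in_Sp4Z open_fst_nonzero
        sp_act_T3 has_derivative_phi3 phi3_fixed surj_dphi3_minus_id\<close>)
qed

end
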